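(* Let $C$ be a free $E$-linear code of length $2n$ and let $G$ be a generator matrix (over $\mathbb{F}_2$) of the binary code $SHull(C_{Res})=C_{Res}\cap (C_{Res})^{\perp_S}$. Then $\kappa G$ is a generator matrix of $SHull(C)$.
   Context: $E=\langle \kappa,\tau \mid 2\kappa=2\tau=0,\ \kappa^2=\kappa,\ \tau^2=\tau,\ \kappa\tau=\kappa,\ \tau\kappa=\tau\rangle$ is the non-unital ring $\{0,\kappa,\tau,\zeta\}$, $\zeta=\kappa+\tau$, with $e\kappa=e\tau=e$, $e\zeta=0$ for all $e\in E$. Every $e\in E$ is uniquely $u\kappa+v\zeta$ ($u,v\in\mathbb{F}_2$); $\pi(u\kappa+v\zeta)=u$, applied componentwise. For $v\in\mathbb{F}_2^m$, $e\in E$: $ev=(ev_1,\dots,ev_m)$ with $0\cdot e=0,1\cdot e=e$; for a binary matrix $G$, $\kappa G$ is the matrix obtained by multiplying each entry by $\kappa$ in this sense. An $E$-linear code of length $2n$ is a left $E$-submodule $C\subseteq E^{2n}$; $C_{Res}=\pi(C)$, $C_{Tor}=\{v\in\mathbb{F}_2^{2n}:\zeta v\in C\}$; $C$ is free if $C_{Res}=C_{Tor}$. Symplectic inner product: for $x=(u|v),y=(u'|v')$ (each half of length $n$, over $E$ or $\mathbb{F}_2$), $\langle x,y\rangle_s=\sum_i u_iv'_i+\sum_i v_iu'_i$. For binary $B$, $B^{\perp_S}=\{z:\langle z,w\rangle_s=0\ \forall w\in B\}$. For $E$-linear $C$: $C^{\perp_{S_L}}=\{z\in E^{2n}:\langle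 z,w\rangle_s=0\ \forall w\in C\}$, $C^{\perp_{S_R}}=\{z\in E^{2n}:\langle w,z\rangle_s=0\ \forall w\in C\}$, $C^{\perp_S}=C^{\perp_{S_L}}\cap C^{\perp_{S_R}}$, $SHull(C)=C\cap C^{\perp_S}$. For $X=\{x_1,\dots,x_k\}\subseteq E^{2n}$, $\langle X\rangle_E=\{\sum e_jx_j: e_j\in E\}$ and $\langle X\rangle_{\mathbb{F}_2}=\{\sum u_jx_j:u_j\in\mathbb{F}_2\}$; $X$ generates $C$ if $C=\langle X\rangle_E\cup\langle X\rangle_{\mathbb{F}_2}$, and a matrix whose rows form a generating set of $C$ is a generator matrix of $C$. *)

theory Defs
  imports Main "HOL-Library.Z2"
begin

datatype E = E0 | Kap | Tau | Zet

fun eplus :: "E \<Rightarrow> E \<Rightarrow> E" where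
  "eplus E0 y = y"
| "eplus x E0 = x"
| "eplus Kap Kap = E0"
| "eplus Tau Tau = E0"
| "eplus Zet Zet = E0"
| "eplus Kap Tau = Zet"
| "eplus Tau Kap = Zet"
| "eplus Kap Zet = Tau"
| "eplus Zet Kap = Tau"
| "eplus Tau Zet = Kap"
| "eplus Zet Tau = Kap"

fun etimes :: "E \<Rightarrow> E \<Rightarrow> E" where
  "etimes x Kap = x"
| "etimes x Tau = x"
| "etimes x E0 = E0"
| "etimes x Zet = E0"

instantiation E :: comm_monoid_add
begin
definition zero_E :: E where "zero_E = E0"
definition plus_E :: "E \<Rightarrow> E \<Rightarrow> E" where "plus_E = eplus"
instance
proof
  fix a b c :: E
  show "a + b + c = a + (b + c)"
    by (cases a; cases b; cases c; simp add: plus_E_def)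
  show "a + b = b + a"
    by (cases a; cases b; simp add: plus_E_def)
  show "0 + a = a"
    by (cases a; simp add: plus_E_def zero_E_def)
qed
end

instantiation E :: times
begin
definition times_E :: "E \<Rightarrow> E \<Rightarrow> E" where "times_E = etimes"
instance ..
end

text \<open>pi(u kappa + v zeta) = u.\<close>
fun piE :: "E \<Rightarrow> bit" where
  "piE E0 = 0"
| "piE Kap = 1"
| "piE Tau = 1"
| "piE Zet = 0"

definition bsc :: "bit \<Rightarrow> E \<Rightarrow> E" where
  "bsc b e = (if b = 1 then e else 0)"

definition E_linear_code :: "nat \<Rightarrow> E list set \<Rightarrow> bool" where
  "E_linear_code n C \<longleftrightarrow>
     C \<subseteq> {x. length x = 2 * n} \<and>
     replicate (2 * n) 0 \<in> C \<and>
     (\<forall>x\<in>C. \<forall>y\<in>C. map2 (+) x y \<in> C) \<and>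
     (\<forall>e x. x \<in> C \<longrightarrow> map (\<lambda>a. e * a) x \<in> C)"

definition C_Res :: "E list set \<Rightarrow> bit list set" where
  "C_Res C = map piE ` C"

definition C_Tor :: "nat \<Rightarrow> E list set \<Rightarrow> bit list set" where
  "C_Tor n C = {v. length v = 2 * n \<and> map (\<lambda>b. bsc b Zet) v \<in> C}"

definition free_code :: "nat \<Rightarrow> E list set \<Rightarrow> bool" where
  "free_code n C \<longleftrightarrow> C_Res C = C_Tor n C"

definition symp :: "nat \<Rightarrow> 'a::{comm_monoid_add,times} list \<Rightarrow> 'a list \<Rightarrow> 'a" where
  "symp n x y = (\<Sum>i<n. x ! i * y ! (n + i)) + (\<Sum>i<n. x ! (n + i) * y ! i)"

definition perpS_bin :: "nat \<Rightarrow> bit list set \<Rightarrow> bit list set" where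
  "perpS_bin n B = {z. length z = 2 * n \<and> (\<forall>w\<in>B. symp n z w = 0)}"

definition SHull_bin :: "nat \<Rightarrow> bit list set \<Rightarrow> bit list set" where
  "SHull_bin n B = B \<inter> perpS_bin n B"

definition perpSL :: "nat \<Rightarrow> E list set \<Rightarrow> E list set" where
  "perpSL n C = {z. length z = 2 * n \<and> (\<forall>w\<in>C. symp n z w = 0)}"

definition perpSR :: "nat \<Rightarrow> E list set \<Rightarrow> E list set" where
  "perpSR n C = {z. length z = 2 * n \<and> (\<forall>w\<in>C. symp n w z = 0)}"

definition perpS :: "nat \<Rightarrow> E list set \<Rightarrow> E list set" where
  "perpS n C = perpSL n C \<inter> perpSR n C"

definition SHull :: "nat \<Rightarrow> E list set \<Rightarrow> E list set" where
  "SHull n C = C \<inter> perpS n C"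

section \<open>Generator matrices (a matrix is the list of its rows)\<close>

definition span_bin :: "nat \<Rightarrow> bit list list \<Rightarrow> bit list set" where
  "span_bin n X = {map (\<lambda>i. \<Sum>j<length X. u j * (X ! j) ! i) [0..<2 * n] | u. True}"

definition gen_matrix_bin :: "nat \<Rightarrow> bit list list \<Rightarrow> bit list set \<Rightarrow> bool" where
  "gen_matrix_bin n G B \<longleftrightarrow> (\<forall>r\<in>set G. length r = 2 * n) \<and> B = span_bin n G"

definition span_E :: "nat \<Rightarrow> E list list \<Rightarrow> E list set" where
  "span_E n X = {map (\<lambda>i. \<Sum>j<length X. e j * (X ! j) ! i) [0..<2 * n] | e. True}"

definition span_F2 :: "nat \<Rightarrow> E list list \<Rightarrow> E list set" where
  "span_F2 n X = {map (\<lambda>i. \<Sum>j<length X. bsc (u j) ((X ! j) ! i)) [0..<2 * n] | u. True}"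

definition gen_matrix_E :: "nat \<Rightarrow> E list list \<Rightarrow> E list set \<Rightarrow> bool" where
  "gen_matrix_E n X C \<longleftrightarrow> (\<forall>r\<in>set X. length r = 2 * n) \<and> C = span_E n X \<union> span_F2 n X"

definition kappa_mat :: "bit list list \<Rightarrow> E list list" where
  "kappa_mat G = map (map (\<lambda>g. bsc g Kap)) G"

end

theory Submission
  imports Defs
begin

text \<open>Every e \<in> E is uniquely \<open>u\<kappa> + v\<zeta>\<close>, so E-vectors are pairs of binary vectors, the
  residue \<open>u = \<pi>(e)\<close> and the torsion part \<open>v = torE e\<close>. Since \<open>x + \<kappa>x = \<zeta>v(x)\<close>, a vector lies
  in a free code \<open>C\<close> iff both its parts lie in \<open>C\<^sub>R\<^sub>e\<^sub>s\<close>, and the symplectic product \<open>\<langle>x, y\<rangle>\<close> vanishes iff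
  \<open>\<langle>\<pi>(x), \<pi>(y)\<rangle>\<close> and \<open>\<langle>v(x), \<pi>(y)\<rangle>\<close> vanish. Hence \<open>x \<in> SHull(C)\<close> iff both parts of \<open>x\<close>
  lie in \<open>SHull(C\<^sub>R\<^sub>e\<^sub>s)\<close>; and \<open>\<Sum> e\<^sub>j (\<kappa> g\<^sub>j)\<close> has parts \<open>\<Sum> \<pi>(e\<^sub>j) g\<^sub>j\<close> and \<open>\<Sum> v(e\<^sub>j) g\<^sub>j\<close>,
  so the span of \<open>\<kappa>G\<close> is described in the same way by the span of \<open>G\<close>.\<close>

fun torE :: "E \<Rightarrow> bit" where
  "torE E0 = 0"
| "torE Kap = 0"
| "torE Tau = 1"
| "torE Zet = 1"

lemma zero_E_eq_E0: "(0::E) = E0"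
  by (simp add: zero_E_def)

lemma E_decompose: "bsc (piE e) Kap + bsc (torE e) Zet = e"
  by (cases e) (simp_all add: bsc_def plus_E_def zero_E_eq_E0)

lemma piE_decompose: "piE (bsc u Kap + bsc v Zet) = u"
  by (cases u; cases v) (simp_all add: bsc_def plus_E_def zero_E_eq_E0)

lemma torE_decompose: "torE (bsc u Kap + bsc v Zet) = v"
  by (cases u; cases v) (simp_all add: bsc_def plus_E_def zero_E_eq_E0)

lemma piE_bsc [simp]: "piE (bsc u e) = piE e * u"
  by (cases u) (simp_all add: bsc_def zero_E_eq_E0)

lemma torE_bsc [simp]: "torE (bsc u e) = torE e * u"
  by (cases u) (simp_all add: bsc_def zero_E_eq_E0)

lemma E_eq_iff: "a = b \<longleftrightarrow> piE a = piE b \<and> torE a = torE b"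
  by (metis E_decompose)

lemma E_eq_0_iff: "a = 0 \<longleftrightarrow> piE a = 0 \<and> torE a = 0"
  by (cases a) (simp_all add: zero_E_eq_E0)

lemma piE_add: "piE (a + b) = piE a + piE b"
  by (cases a; cases b) (simp_all add: plus_E_def zero_E_eq_E0)

lemma torE_add: "torE (a + b) = torE a + torE b"
  by (cases a; cases b) (simp_all add: plus_E_def zero_E_eq_E0)

lemma piE_sum: "piE (sum f A) = (\<Sum>j\<in>A. piE (f j))"
  using sum_comp_morphism[of piE f A] by (simp add: piE_add zero_E_eq_E0)

lemma torE_sum: "torE (sum f A) = (\<Sum>j\<in>A. torE (f j))"
  using sum_comp_morphism[of torE f A] by (simp add: torE_add zero_E_eq_E0)

lemma times_E_eq_bsc: "a * b = bsc (piE b) a"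
  by (cases a; cases b) (simp_all add: times_E_def bsc_def zero_E_eq_E0)

lemma piE_mult: "piE (a * b) = piE a * piE b"
  by (simp add: times_E_eq_bsc)

lemma torE_mult: "torE (a * b) = torE a * piE b"
  by (simp add: times_E_eq_bsc)

lemma Kap_times: "Kap * a = bsc (piE a) Kap"
  by (cases a) (simp_all add: times_E_def bsc_def zero_E_eq_E0)

lemma add_Kap_times: "a + Kap * a = bsc (torE a) Zet"
  by (cases a) (simp_all add: times_E_def bsc_def plus_E_def zero_E_eq_E0)

lemma E_list_eqI:
  fixes x y :: "E list"
  assumes "map piE x = map piE y" and "map torE x = map torE y"
  shows "x = y"
proof (rule nth_equalityI)
  show "length x = length y"
    using assms(1) by (metis length_map)
  then show "x ! i = y ! i" if "i < length x" for i
    using assms that by (metis E_eq_iff nth_map)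
qed

lemma piE_symp:
  fixes x y :: "E list"
  assumes "length x = 2 * n" and "length y = 2 * n"
  shows "piE (symp n x y) = symp n (map piE x) (map piE y)"
  using assms by (simp add: symp_def piE_add piE_sum piE_mult)

lemma torE_symp:
  fixes x y :: "E list"
  assumes "length x = 2 * n" and "length y = 2 * n"
  shows "torE (symp n x y) = symp n (map torE x) (map piE y)"
  using assms by (simp add: symp_def torE_add torE_sum torE_mult)

lemma symp_E_eq_0_iff:
  fixes x y :: "E list"
  assumes "length x = 2 * n" and "length y = 2 * n"
  shows "symp n x y = 0 \<longleftrightarrow>
    symp n (map piE x) (map piE y) = 0 \<and> symp n (map torE x) (map piE y) = 0"
  using assms by (simp only: E_eq_0_iff piE_symp torE_symp)

lemma symp_commute: "symp n x y = symp n y (x :: 'a :: {comm_monoid_add, comm_semiring} list)"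
  unfolding symp_def by (simp only: mult.commute add.commute)

lemma E_linear_code_length:
  "E_linear_code n C \<Longrightarrow> x \<in> C \<Longrightarrow> length x = 2 * n"
  by (auto simp: E_linear_code_def)

lemma free_code_mem_iff:
  assumes lin: "E_linear_code n C" and free: "free_code n C"
  shows "x \<in> C \<longleftrightarrow> length x = 2 * n \<and> map piE x \<in> C_Res C \<and> map torE x \<in> C_Res C"
proof
  assume x: "x \<in> C"
  have "map2 (+) x (map ((*) Kap) x) \<in> C"
    using lin x by (simp add: E_linear_code_def)
  moreover have "map2 (+) x (map ((*) Kap) x) = map (\<lambda>b. bsc b Zet) (map torE x)"
    by (simp add: zip_map2 zip_same_conv_map add_Kap_times)
  ultimately have "map torE x \<in> C_Tor n C"
    using E_linear_code_length[OF lin x] by (simp add: C_Tor_def)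
  moreover have "map piE x \<in> C_Res C"
    using x by (simp add: C_Res_def)
  ultimately show "length x = 2 * n \<and> map piE x \<in> C_Res C \<and> map torE x \<in> C_Res C"
    using free E_linear_code_length[OF lin x] unfolding free_code_def by blast
next
  assume x: "length x = 2 * n \<and> map piE x \<in> C_Res C \<and> map torE x \<in> C_Res C"
  then obtain y where y: "y \<in> C" "map piE y = map piE x"
    by (auto simp: C_Res_def)
  have "map (\<lambda>b. bsc b Zet) (map torE x) \<in> C"
    using x free by (simp add: free_code_def C_Tor_def)
  moreover have "map ((*) Kap) y \<in> C"
    using lin y(1) by (simp add: E_linear_code_def)
  ultimately have "map2 (+) (map ((*) Kap) y) (map (\<lambda>b. bsc b Zet) (map torE x)) \<in> C"
    using lin by (simp add: E_linear_code_def)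
  moreover have "map ((*) Kap) y = map (\<lambda>b. bsc b Kap) (map piE x)"
    by (simp add: Kap_times flip: y(2))
  ultimately show "x \<in> C"
    by (simp add: map2_map_map E_decompose)
qed

lemma perpSL_mem_iff:
  assumes "\<forall>w\<in>C. length w = 2 * n" and "length x = 2 * n"
  shows "x \<in> perpSL n C \<longleftrightarrow>
    map piE x \<in> perpS_bin n (C_Res C) \<and> map torE x \<in> perpS_bin n (C_Res C)"
proof -
  have "x \<in> perpSL n C \<longleftrightarrow>
      (\<forall>w\<in>C. symp n (map piE x) (map piE w) = 0 \<and> symp n (map torE x) (map piE w) = 0)"
    using assms symp_E_eq_0_iff[of x n] by (simp add: perpSL_def)
  also have "\<dots> \<longleftrightarrow> map piE x \<in> perpS_bin n (C_Res C) \<and> map torE x \<in> perpS_bin n (C_Res C)"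
    using assms(2) by (auto simp: perpS_bin_def C_Res_def)
  finally show ?thesis .
qed

lemma SHull_eq_inter_perpSL:
  assumes lin: "E_linear_code n C" and free: "free_code n C"
  shows "SHull n C = C \<inter> perpSL n C"
proof -
  have "x \<in> perpSR n C" if x: "x \<in> C" "x \<in> perpSL n C" for x
  proof -
    have lx: "length x = 2 * n"
      using E_linear_code_length[OF lin x(1)] .
    have x_perp: "map piE x \<in> perpS_bin n (C_Res C)"
      using perpSL_mem_iff[of C n x] x(2) lx E_linear_code_length[OF lin] by blast
    have "symp n w x = 0" if w: "w \<in> C" for w
    proof -
      have "map piE w \<in> C_Res C" "map torE w \<in> C_Res C"
        using free_code_mem_iff[OF lin free] w by blast+
      then have "symp n (map piE w) (map piE x) = 0 \<and> symp n (map torE w) (map piE x) = 0"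
        using x_perp by (simp add: perpS_bin_def symp_commute[of n _ "map piE x"])
      then show ?thesis
        using symp_E_eq_0_iff[of w n x] E_linear_code_length[OF lin w] lx by blast
    qed
    then show ?thesis
      using lx by (simp add: perpSR_def)
  qed
  then show ?thesis
    by (auto simp: SHull_def perpS_def)
qed

lemma SHull_mem_iff:
  assumes lin: "E_linear_code n C" and free: "free_code n C"
  shows "x \<in> SHull n C \<longleftrightarrow> length x = 2 * n \<and>
    map piE x \<in> SHull_bin n (C_Res C) \<and> map torE x \<in> SHull_bin n (C_Res C)"
  using free_code_mem_iff[OF lin free, of x] perpSL_mem_iff[of C n x] E_linear_code_length[OF lin]
  unfolding SHull_eq_inter_perpSL[OF lin free] SHull_bin_def by blast

lemma times_bsc_Kap: "e * bsc g Kap = bsc g e"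
  by (cases g) (simp_all add: bsc_def times_E_def zero_E_eq_E0)

lemma bsc_commute: "bsc u (bsc g e) = bsc g (bsc u e)"
  by (cases u; cases g) (simp_all add: bsc_def)

lemma length_kappa_mat [simp]: "length (kappa_mat G) = length G"
  by (simp add: kappa_mat_def)

lemma kappa_mat_nth:
  "j < length G \<Longrightarrow> i < length (G ! j) \<Longrightarrow> kappa_mat G ! j ! i = bsc (G ! j ! i) Kap"
  by (simp add: kappa_mat_def)

lemma kappa_mat_E_comb:
  assumes "\<forall>r\<in>set G. length r = m"
  shows "map (\<lambda>i. \<Sum>j<length G. e j * kappa_mat G ! j ! i) [0..<m] =
    map (\<lambda>i. \<Sum>j<length G. bsc (G ! j ! i) (e j)) [0..<m]"
proof (intro map_cong sum.cong)
  fix i j assume "i \<in> set [0..<m]" "j \<in> {..<length G}"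
  then show "e j * kappa_mat G ! j ! i = bsc (G ! j ! i) (e j)"
    using assms by (simp add: kappa_mat_nth times_bsc_Kap)
qed simp_all

lemma kappa_mat_F2_comb:
  assumes "\<forall>r\<in>set G. length r = m"
  shows "map (\<lambda>i. \<Sum>j<length G. bsc (u j) (kappa_mat G ! j ! i)) [0..<m] =
    map (\<lambda>i. \<Sum>j<length G. bsc (G ! j ! i) (bsc (u j) Kap)) [0..<m]"
proof (intro map_cong sum.cong)
  fix i j assume "i \<in> set [0..<m]" "j \<in> {..<length G}"
  then show "bsc (u j) (kappa_mat G ! j ! i) = bsc (G ! j ! i) (bsc (u j) Kap)"
    using assms by (simp add: kappa_mat_nth bsc_commute)
qed simp_all

lemma span_E_kappa_mat:
  assumes rows: "\<forall>r\<in>set G. length r = 2 * n"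
  shows "span_E n (kappa_mat G) =
    {x. length x = 2 * n \<and> map piE x \<in> span_bin n G \<and> map torE x \<in> span_bin n G}"
proof -
  define comb where "comb e = map (\<lambda>i. \<Sum>j<length G. bsc (G ! j ! i) (e j)) [0..<2 * n]" for e
  define bin_comb where "bin_comb u = map (\<lambda>i. \<Sum>j<length G. u j * G ! j ! i) [0..<2 * n]" for u
  have span_E_eq: "span_E n (kappa_mat G) = range comb"
    by (auto simp: span_E_def comb_def kappa_mat_E_comb[OF rows])
  have span_bin_eq: "span_bin n G = range bin_comb"
    by (auto simp: span_bin_def bin_comb_def)
  have piE_comb: "map piE (comb e) = bin_comb (piE \<circ> e)"
    and torE_comb: "map torE (comb e) = bin_comb (torE \<circ> e)" for e
    by (simp_all add: comb_def bin_comb_def piE_sum torE_sum)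
  have combI: "x \<in> range comb" if "map piE x = bin_comb u" "map torE x = bin_comb v" for x u v
  proof
    let ?e = "\<lambda>j. bsc (u j) Kap + bsc (v j) Zet"
    show "x = comb ?e"
      using that
      by (intro E_list_eqI) (simp_all add: piE_comb torE_comb piE_decompose torE_decompose comp_def)
  qed simp
  have "length (comb e) = 2 * n" for e
    by (simp add: comb_def)
  then show ?thesis
    using combI by (auto simp: span_E_eq span_bin_eq piE_comb torE_comb)
qed

lemma span_F2_kappa_mat_subset:
  assumes rows: "\<forall>r\<in>set G. length r = 2 * n"
  shows "span_F2 n (kappa_mat G) \<subseteq> span_E n (kappa_mat G)"
  by (auto simp: span_F2_def span_E_def kappa_mat_F2_comb[OF rows] kappa_mat_E_comb[OF rows])

theorem mainTheorem2:
  fixes n :: nat and C :: "E list set" and G :: "bit list list"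
  assumes "E_linear_code n C"
    and "free_code n C"
    and "gen_matrix_bin n G (SHull_bin n (C_Res C))"
  shows "gen_matrix_E n (kappa_mat G) (SHull n C)"
proof -
  have rows: "\<forall>r\<in>set G. length r = 2 * n" and hull: "SHull_bin n (C_Res C) = span_bin n G"
    using assms(3) by (simp_all add: gen_matrix_bin_def)
  have "SHull n C = span_E n (kappa_mat G)"
    by (auto simp: SHull_mem_iff[OF assms(1,2)] span_E_kappa_mat[OF rows] hull)
  moreover have "\<forall>r\<in>set (kappa_mat G). length r = 2 * n"
    using rows by (auto simp: kappa_mat_def)
  ultimately show ?thesis
    using span_F2_kappa_mat_subset[OF rows] by (auto simp: gen_matrix_E_def)
qed

end
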